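(* There exists a constant $c_1>0$ such that for all sufficiently large $n$ with $t\le c_1 n$, for all $k$ with $30\, x\log n\le k\le c_1 n$ and every tuple $(k_1,\dots,k_x)$ of integers with $t_i\le k_i\le a_i$ and $\sum_i k_i=k$, we have $a_{k_1,\dots,k_x}<\frac{1}{n^{3x}}$.
   Context: Random graph model: $V$ is a set of $n$ vertices, $B\subseteq V$ a target set with $|B|=t$, each $v\in V$ has a prescribed out-degree $d_v$ with $2\le d_{\min}\le d_v\le d_{\max}$ (constants), and for each $v$ independently its out-neighbour set is chosen uniformly among all $d_v$-element subsets of $V$. Let $d_1,\dots,d_x$ be the distinct out-degrees, $a_i$ the number of vertices of out-degree $d_i$, $t_i$ the number of vertices of $B$ of out-degree $d_i$; $\log$ is the natural logarithm. For $S\supseteq B$ containing $k_i$ vertices of out-degree $d_i$, $R(k_1,\dots,k_x)$ is the probability that every vertex of $S$ has a directed path to $B$ lying inside $S$. For $k=\sum_i k_i$ with $t_i\le k_i\le a_i$, $a_{k_1,\dots,k_x}=\left(\prod_{i=1}^x\binom{a_i-t_i}{k_i-t_i}\left(\binom{n-k}{d_i}/\binom{n}{d_i}\right)^{a_i-k_i}\right)R(k_1,\dots,k_x)$, with the factor $(\binom{n-k}{d_i}/\binom{n}{d_i})^{a_i-k_i}$ equal to $1$ when $a_i=k_i$. *)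

theory Defs
  imports "HOL-Probability.Probability"
begin

definition nbr_pmf :: "nat set \<Rightarrow> (nat \<Rightarrow> nat) \<Rightarrow> (nat \<Rightarrow> nat set) pmf" where
  "nbr_pmf V d = Pi_pmf V {} (\<lambda>v. pmf_of_set {A. A \<subseteq> V \<and> card A = d v})"

definition all_reach_within :: "(nat \<Rightarrow> nat set) \<Rightarrow> nat set \<Rightarrow> nat set \<Rightarrow> bool" where
  "all_reach_within N S B \<longleftrightarrow>
     (\<forall>v\<in>S. \<exists>b\<in>B. (v, b) \<in> {(u, w). u \<in> S \<and> w \<in> S \<and> w \<in> N u}\<^sup>*)"

definition R_prob :: "nat set \<Rightarrow> (nat \<Rightarrow> nat) \<Rightarrow> nat set \<Rightarrow> nat set \<Rightarrow> real" where
  "R_prob V d B S = measure_pmf.prob (nbr_pmf V d) {N. all_reach_within N S B}"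

definition cnt :: "(nat \<Rightarrow> nat) \<Rightarrow> nat set \<Rightarrow> nat \<Rightarrow> nat" where
  "cnt d X \<delta> = card {v \<in> X. d v = \<delta>}"

text \<open>The quantity a_{k_1,...,k_x} for the degree profile (k_i) of S; the product
  ranges over the distinct out-degrees d_1,...,d_x, i.e. over d ` V.\<close>
definition a_coef :: "nat set \<Rightarrow> (nat \<Rightarrow> nat) \<Rightarrow> nat set \<Rightarrow> nat set \<Rightarrow> real" where
  "a_coef V d B S =
     (\<Prod>\<delta>\<in>d ` V.
        real ((cnt d V \<delta> - cnt d B \<delta>) choose (cnt d S \<delta> - cnt d B \<delta>)) *
        (real ((card V - card S) choose \<delta>) / real (card V choose \<delta>))
          ^ (cnt d V \<delta> - cnt d S \<delta>))
     * R_prob V d B S"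

end

theory Submission
  imports Defs
begin

(* Let n = |V|, k = |S| and group the vertices by out-degree \<delta>. A uniform \<delta>-subset of V
   misses S with probability q_\<delta> \<le> exp(-\<delta>k/n) and meets it with probability
   p_\<delta> = 1 - q_\<delta> \<le> \<delta>k/(n - \<delta>). A vertex of S - B that reaches B inside S has an
   out-neighbour in S, and these events are independent, so R \<le> \<Prod>_\<delta> p_\<delta>^m_\<delta>.
   The binomial theorem gives C(A,m) p^m \<le> exp(m + Ap/e), hence
   a \<le> exp(|S - B| + k/(e(n - dmax)) \<Sum>_{V-B} d - (k/n) \<Sum>_{V-S} d).
   All degrees are at least 2, so the last sum is about 2n, and since e > 5/2 it outweighs the
   middle one: for k \<le> n/(1000 dmax) the exponent is at most -k/6, and k \<ge> 30 x log n makes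
   exp(-k/6) < n^(-3x). *)

definition avoid_prob :: "nat \<Rightarrow> nat \<Rightarrow> nat \<Rightarrow> real" where
  "avoid_prob n k \<delta> = real ((n - k) choose \<delta>) / real (n choose \<delta>)"

lemma all_reach_within_out_nbr:
  assumes "all_reach_within N S B" "v \<in> S" "v \<notin> B"
  shows "N v \<inter> S \<noteq> {}"
proof -
  obtain b where "b \<in> B" and path: "(v, b) \<in> {(u, w). u \<in> S \<and> w \<in> S \<and> w \<in> N u}\<^sup>*"
    using assms(1,2) unfolding all_reach_within_def by blast
  then have "v \<noteq> b" using assms(3) by auto
  with path show ?thesis
    by (cases rule: converse_rtranclE) auto
qed

lemma prob_subset_meets:
  assumes "finite V" "S \<subseteq> V" "\<delta> \<le> card V"
  shows "measure_pmf.prob (pmf_of_set {A. A \<subseteq> V \<and> card A = \<delta>}) {A. A \<inter> S \<noteq> {}}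
         = 1 - avoid_prob (card V) (card S) \<delta>"
proof -
  define U where "U = {A. A \<subseteq> V \<and> card A = \<delta>}"
  have "finite U" unfolding U_def using assms(1) by simp
  have card_U: "card U = card V choose \<delta>"
    unfolding U_def using n_subsets[OF assms(1)] by simp
  then have "U \<noteq> {}" using assms(3) by fastforce
  have "U \<inter> {A. A \<inter> S = {}} = {A. A \<subseteq> V - S \<and> card A = \<delta>}"
    unfolding U_def by blast
  then have "card (U \<inter> {A. A \<inter> S = {}}) = (card V - card S) choose \<delta>"
    using n_subsets[of "V - S" \<delta>] assms(1,2) by (simp add: card_Diff_subset finite_subset)
  then have "measure_pmf.prob (pmf_of_set U) {A. A \<inter> S = {}} = avoid_prob (card V) (card S) \<delta>"
    using measure_pmf_of_set[OF \<open>U \<noteq> {}\<close> \<open>finite U\<close>] card_U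
    unfolding avoid_prob_def by simp
  moreover have "{A. A \<inter> S \<noteq> {}} = UNIV - {A. A \<inter> S = {}}"
    by auto
  ultimately show ?thesis
    using measure_pmf.prob_compl[where A = "{A. A \<inter> S = {}}" and M = "pmf_of_set U"]
    unfolding U_def by simp
qed

lemma R_prob_le_prod:
  assumes "finite V" "S \<subseteq> V" "\<forall>v\<in>V. d v \<le> card V"
  shows "R_prob V d B S \<le> (\<Prod>v\<in>S - B. 1 - avoid_prob (card V) (card S) (d v))"
proof -
  define Y where "Y v = (if v \<in> S - B then {A. A \<inter> S \<noteq> {}} else UNIV)" for v
  have "{N. all_reach_within N S B} \<subseteq> Pi V Y"
    unfolding Y_def Pi_def using all_reach_within_out_nbr by fastforce
  then have "R_prob V d B S \<le> measure_pmf.prob (nbr_pmf V d) (Pi V Y)"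
    unfolding R_prob_def by (rule measure_pmf.finite_measure_mono) simp
  also have "\<dots> = (\<Prod>v\<in>V. measure_pmf.prob (pmf_of_set {A. A \<subseteq> V \<and> card A = d v}) (Y v))"
    unfolding nbr_pmf_def by (rule measure_Pi_pmf_Pi[OF assms(1)])
  also have "\<dots> = (\<Prod>v\<in>V. if v \<in> S - B then 1 - avoid_prob (card V) (card S) (d v) else 1)"
    using assms by (intro prod.cong) (auto simp: Y_def prob_subset_meets)
  also have "\<dots> = (\<Prod>v\<in>S - B. 1 - avoid_prob (card V) (card S) (d v))"
  proof -
    have "V \<inter> (S - B) = S - B" using assms(2) by blast
    then show ?thesis
      using prod.inter_restrict[OF assms(1), of "\<lambda>v. 1 - avoid_prob (card V) (card S) (d v)" "S - B"]
      by simp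
  qed
  finally show ?thesis .
qed

lemma prod_by_degree:
  fixes f :: "nat \<Rightarrow> 'a::comm_monoid_mult"
  assumes "finite V" "X \<subseteq> V"
  shows "(\<Prod>v\<in>X. f (d v)) = (\<Prod>\<delta>\<in>d ` V. f \<delta> ^ cnt d X \<delta>)"
proof -
  have "(\<Prod>v\<in>X. f (d v)) = (\<Prod>\<delta>\<in>d ` V. \<Prod>v\<in>{v \<in> X. d v = \<delta>}. f (d v))"
    using assms by (intro prod.group[symmetric]) (auto intro: finite_subset)
  also have "\<dots> = (\<Prod>\<delta>\<in>d ` V. f \<delta> ^ cnt d X \<delta>)"
    unfolding cnt_def by (intro prod.cong refl) simp
  finally show ?thesis .
qed

lemma sum_by_degree:
  fixes f :: "nat \<Rightarrow> real"
  assumes "finite V" "X \<subseteq> V"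
  shows "(\<Sum>v\<in>X. f (d v)) = (\<Sum>\<delta>\<in>d ` V. f \<delta> * real (cnt d X \<delta>))"
proof -
  have "(\<Sum>v\<in>X. f (d v)) = (\<Sum>\<delta>\<in>d ` V. \<Sum>v\<in>{v \<in> X. d v = \<delta>}. f (d v))"
    using assms by (intro sum.group[symmetric]) (auto intro: finite_subset)
  also have "\<dots> = (\<Sum>\<delta>\<in>d ` V. f \<delta> * real (cnt d X \<delta>))"
    unfolding cnt_def by (intro sum.cong refl) simp
  finally show ?thesis .
qed

lemma cnt_Diff:
  assumes "finite X" "Y \<subseteq> X"
  shows "cnt d X \<delta> - cnt d Y \<delta> = cnt d (X - Y) \<delta>"
proof -
  have "{v \<in> X - Y. d v = \<delta>} = {v \<in> X. d v = \<delta>} - {v \<in> Y. d v = \<delta>}" by blast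
  moreover have "finite {v \<in> Y. d v = \<delta>}" using finite_subset[OF assms(2,1)] by simp
  ultimately show ?thesis
    unfolding cnt_def using assms(2) by (simp add: card_Diff_subset subset_iff)
qed

lemma avoid_prob_eq_prod:
  assumes "k + \<delta> \<le> n"
  shows "avoid_prob n k \<delta> = (\<Prod>i<\<delta>. (real n - real k - real i) / (real n - real i))"
proof -
  have "avoid_prob n k \<delta>
      = (\<Prod>i<\<delta>. real (n - k - i) / real (\<delta> - i)) / (\<Prod>i<\<delta>. real (n - i) / real (\<delta> - i))"
    unfolding avoid_prob_def using assms by (simp add: binomial_altdef_of_nat atLeast0LessThan)
  also have "\<dots> = (\<Prod>i<\<delta>. (real (n - k - i) / real (\<delta> - i)) / (real (n - i) / real (\<delta> - i)))"
    by (rule prod_dividef[symmetric])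
  also have "\<dots> = (\<Prod>i<\<delta>. (real n - real k - real i) / (real n - real i))"
    using assms by (intro prod.cong refl) auto
  finally show ?thesis .
qed

lemma avoid_prob_le_exp:
  assumes "k + \<delta> \<le> n"
  shows "avoid_prob n k \<delta> \<le> exp (- real \<delta> * real k / real n)"
proof -
  have "avoid_prob n k \<delta> \<le> (\<Prod>i<\<delta>. 1 - real k / real n)"
    unfolding avoid_prob_eq_prod[OF assms]
  proof (intro prod_mono conjI)
    fix i assume "i \<in> {..<\<delta>}"
    then have "i < n" "k + i \<le> n" using assms by auto
    then show "0 \<le> (real n - real k - real i) / (real n - real i)"
      by (intro divide_nonneg_pos) auto
    have "(real n - real k - real i) * real n \<le> (real n - real k) * (real n - real i)"
      using \<open>k + i \<le> n\<close> by (simp add: algebra_simps mult_left_mono)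
    with \<open>i < n\<close> show "(real n - real k - real i) / (real n - real i) \<le> 1 - real k / real n"
      by (simp add: divide_simps)
  qed
  also have "\<dots> \<le> exp (- real k / real n) ^ \<delta>"
  proof -
    have "0 \<le> 1 - real k / real n" using assms by (simp add: divide_simps)
    then show ?thesis
      using exp_ge_add_one_self[of "- real k / real n"] by (simp add: power_mono)
  qed
  also have "\<dots> = exp (- real \<delta> * real k / real n)"
    by (simp add: exp_of_nat_mult[symmetric])
  finally show ?thesis .
qed

lemma avoid_prob_le_one:
  assumes "k + \<delta> \<le> n"
  shows "avoid_prob n k \<delta> \<le> 1"
  using avoid_prob_le_exp[OF assms] by (simp add: order_trans)

lemma one_minus_avoid_prob_le:
  assumes "k + \<delta> \<le> n" "\<delta> < n"
  shows "1 - avoid_prob n k \<delta> \<le> real \<delta> * real k / (real n - real \<delta>)"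
proof -
  define c where "c = 1 - real k / (real n - real \<delta>)"
  have "1 - real \<delta> * real k / (real n - real \<delta>) = 1 + real \<delta> * (c - 1)"
    unfolding c_def by simp
  also have "\<dots> \<le> c ^ \<delta>"
    using Bernoulli_inequality[of "c - 1" \<delta>] assms by (simp add: c_def divide_simps)
  also have "\<dots> = (\<Prod>i<\<delta>. c)" by simp
  also have "\<dots> \<le> avoid_prob n k \<delta>"
    unfolding avoid_prob_eq_prod[OF assms(1)]
  proof (intro prod_mono conjI)
    fix i assume "i \<in> {..<\<delta>}"
    then have "i < \<delta>" by simp
    show "0 \<le> c" unfolding c_def using assms by (simp add: divide_simps)
    have "(real n - real \<delta> - real k) * (real n - real i) \<le> (real n - real k - real i) * (real n - real \<delta>)"
      using \<open>i < \<delta>\<close> by (simp add: algebra_simps mult_right_mono)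
    with \<open>i < \<delta>\<close> assms show "c \<le> (real n - real k - real i) / (real n - real i)"
      unfolding c_def by (simp add: divide_simps)
  qed
  finally show ?thesis by simp
qed

lemma choose_mult_power_le:
  fixes y :: real
  assumes "0 \<le> y"
  shows "real (A choose m) * y ^ m \<le> (1 + y) ^ A"
proof (cases "m \<le> A")
  case True
  have "real (A choose m) * y ^ m \<le> (\<Sum>j\<le>A. real (A choose j) * y ^ j)"
    using True assms by (intro member_le_sum) auto
  also have "\<dots> = (1 + y) ^ A"
    using binomial_ring[of y 1 A] by (simp add: add.commute)
  finally show ?thesis .
qed (use assms in \<open>simp add: binomial_eq_0\<close>)

lemma choose_mult_power_le_exp:
  fixes p :: real
  assumes "0 \<le> p"
  shows "real (A choose m) * p ^ m \<le> exp (real m + real A * p / exp 1)"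
proof -
  have "real (A choose m) * p ^ m = exp (real m) * (real (A choose m) * (p / exp 1) ^ m)"
    by (simp add: power_divide exp_of_nat_mult[symmetric])
  also have "\<dots> \<le> exp (real m) * (1 + p / exp 1) ^ A"
    using assms by (intro mult_left_mono choose_mult_power_le) auto
  also have "\<dots> \<le> exp (real m) * exp (p / exp 1) ^ A"
    using assms by (intro mult_left_mono power_mono exp_ge_add_one_self) auto
  also have "\<dots> = exp (real m + real A * p / exp 1)"
    by (simp add: exp_add exp_of_nat_mult[symmetric])
  finally show ?thesis .
qed

lemma a_coef_le_prod:
  assumes "finite V" "B \<subseteq> S" "S \<subseteq> V" "\<forall>v\<in>V. d v \<le> card V"
  defines "q \<equiv> avoid_prob (card V) (card S)"
  shows "a_coef V d B S \<le> (\<Prod>\<delta>\<in>d ` V.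
           real (cnt d (V - B) \<delta> choose cnt d (S - B) \<delta>) * q \<delta> ^ cnt d (V - S) \<delta>
             * (1 - q \<delta>) ^ cnt d (S - B) \<delta>)"
proof -
  have "finite S" using assms(1,3) finite_subset by blast
  have "a_coef V d B S = (\<Prod>\<delta>\<in>d ` V.
           real (cnt d (V - B) \<delta> choose cnt d (S - B) \<delta>) * q \<delta> ^ cnt d (V - S) \<delta>) * R_prob V d B S"
    unfolding a_coef_def q_def avoid_prob_def
    using assms(1-3) \<open>finite S\<close> by (simp add: cnt_Diff)
  also have "\<dots> \<le> (\<Prod>\<delta>\<in>d ` V.
           real (cnt d (V - B) \<delta> choose cnt d (S - B) \<delta>) * q \<delta> ^ cnt d (V - S) \<delta>)
           * (\<Prod>\<delta>\<in>d ` V. (1 - q \<delta>) ^ cnt d (S - B) \<delta>)"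
  proof (intro mult_left_mono prod_nonneg)
    have "R_prob V d B S \<le> (\<Prod>v\<in>S - B. 1 - q (d v))"
      unfolding q_def using R_prob_le_prod[OF assms(1,3,4)] .
    also have "\<dots> = (\<Prod>\<delta>\<in>d ` V. (1 - q \<delta>) ^ cnt d (S - B) \<delta>)"
      using assms(3) by (intro prod_by_degree[OF assms(1)]) blast
    finally show "R_prob V d B S \<le> \<dots>" .
  qed (simp add: q_def avoid_prob_def)
  finally show ?thesis by (simp add: prod.distrib)
qed

lemma degree_factor_le_exp:
  assumes "k + \<delta> \<le> n" "\<delta> \<le> dmax" "dmax < n"
  defines "q \<equiv> avoid_prob n k \<delta>"
  shows "real (A choose m) * q ^ r * (1 - q) ^ m
         \<le> exp (real m + real k / (exp 1 * (real n - real dmax)) * real \<delta> * real A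
                  - real k / real n * real \<delta> * real r)"
proof -
  have q_le: "q \<le> exp (- real \<delta> * real k / real n)"
    unfolding q_def by (rule avoid_prob_le_exp[OF assms(1)])
  have "q \<ge> 0" unfolding q_def avoid_prob_def by simp
  have "1 - q \<ge> 0" unfolding q_def using avoid_prob_le_one[OF assms(1)] by simp
  have "1 - q \<le> real \<delta> * real k / (real n - real \<delta>)"
    unfolding q_def using assms(1-3) by (intro one_minus_avoid_prob_le) auto
  also have "\<dots> \<le> real \<delta> * real k / (real n - real dmax)"
    using assms(2,3) by (intro divide_left_mono mult_pos_pos) auto
  finally have "real A * (1 - q) / exp 1 \<le> real A * (real \<delta> * real k / (real n - real dmax)) / exp 1"
    by (intro divide_right_mono mult_left_mono) auto
  then have hit_le: "real A * (1 - q) / exp 1 \<le> real k / (exp 1 * (real n - real dmax)) * real \<delta> * real A"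
    by (simp add: ac_simps)
  have "real (A choose m) * q ^ r * (1 - q) ^ m = real (A choose m) * (1 - q) ^ m * q ^ r"
    by simp
  also have "\<dots> \<le> exp (real m + real A * (1 - q) / exp 1) * exp (- real \<delta> * real k / real n) ^ r"
    using \<open>1 - q \<ge> 0\<close> \<open>q \<ge> 0\<close> q_le
    by (intro mult_mono choose_mult_power_le_exp power_mono) auto
  also have "\<dots> \<le> exp (real m + real k / (exp 1 * (real n - real dmax)) * real \<delta> * real A)
                   * exp (- real \<delta> * real k / real n) ^ r"
    using hit_le by (intro mult_right_mono) auto
  also have "\<dots> = exp (real m + real k / (exp 1 * (real n - real dmax)) * real \<delta> * real A
                       + real r * (- real \<delta> * real k / real n))"
    by (simp add: exp_of_nat_mult[symmetric] mult_exp_exp)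
  also have "\<dots> = exp (real m + real k / (exp 1 * (real n - real dmax)) * real \<delta> * real A
                  - real k / real n * real \<delta> * real r)"
    by (simp add: algebra_simps)
  finally show ?thesis .
qed

lemma a_coef_le_exp:
  assumes "finite V" "B \<subseteq> S" "S \<subseteq> V" "\<forall>v\<in>V. d v \<le> dmax"
    and "card S + dmax \<le> card V" "dmax < card V"
  defines "u \<equiv> real (card S) / (exp 1 * (real (card V) - real dmax))"
    and "w \<equiv> real (card S) / real (card V)"
  shows "a_coef V d B S \<le> exp (real (card (S - B)) + u * (\<Sum>v\<in>V - B. real (d v))
                                   - w * (\<Sum>v\<in>V - S. real (d v)))"
proof -
  define E where "E \<delta> = real (cnt d (S - B) \<delta>) + u * real \<delta> * real (cnt d (V - B) \<delta>)
                        - w * real \<delta> * real (cnt d (V - S) \<delta>)" for \<delta>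
  have "S - B \<subseteq> V" using assms(3) by blast
  then have sum_E: "(\<Sum>\<delta>\<in>d ` V. E \<delta>) = real (card (S - B)) + u * (\<Sum>v\<in>V - B. real (d v))
                                   - w * (\<Sum>v\<in>V - S. real (d v))"
    using sum_by_degree[OF assms(1), of "S - B" "\<lambda>_. 1" d]
      sum_by_degree[OF assms(1), of "V - B" real d] sum_by_degree[OF assms(1), of "V - S" real d]
    unfolding E_def by (auto simp: sum.distrib sum_subtractf sum_distrib_left ac_simps)
  have "a_coef V d B S \<le> (\<Prod>\<delta>\<in>d ` V.
           real (cnt d (V - B) \<delta> choose cnt d (S - B) \<delta>)
             * avoid_prob (card V) (card S) \<delta> ^ cnt d (V - S) \<delta>
             * (1 - avoid_prob (card V) (card S) \<delta>) ^ cnt d (S - B) \<delta>)"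
    using assms(1-6) by (intro a_coef_le_prod) auto
  also have "\<dots> \<le> (\<Prod>\<delta>\<in>d ` V. exp (E \<delta>))"
  proof (intro prod_mono conjI)
    fix \<delta> assume "\<delta> \<in> d ` V"
    then have "\<delta> \<le> dmax" using assms(4) by auto
    then show "real (cnt d (V - B) \<delta> choose cnt d (S - B) \<delta>)
             * avoid_prob (card V) (card S) \<delta> ^ cnt d (V - S) \<delta>
             * (1 - avoid_prob (card V) (card S) \<delta>) ^ cnt d (S - B) \<delta> \<le> exp (E \<delta>)"
      using degree_factor_le_exp[of "card S" \<delta> "card V" dmax] assms(5,6)
      unfolding E_def u_def w_def by simp
    show "0 \<le> real (cnt d (V - B) \<delta> choose cnt d (S - B) \<delta>)
             * avoid_prob (card V) (card S) \<delta> ^ cnt d (V - S) \<delta>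
             * (1 - avoid_prob (card V) (card S) \<delta>) ^ cnt d (S - B) \<delta>"
      using avoid_prob_le_one[of "card S" \<delta> "card V"] \<open>\<delta> \<le> dmax\<close> assms(5)
      by (simp add: avoid_prob_def)
  qed
  also have "\<dots> = exp (\<Sum>\<delta>\<in>d ` V. E \<delta>)"
    using assms(1) by (simp add: exp_sum)
  finally show ?thesis unfolding sum_E .
qed

lemma exponent_le_neg_sixth:
  fixes k n D T dmax :: real
  assumes "0 \<le> k" "1 \<le> dmax" "100 * dmax < n" "1000 * dmax * k \<le> n"
    and "0 \<le> T" "T \<le> k * dmax" "2 * (n - k) \<le> D"
  shows "k + k / (exp 1 * (n - dmax)) * (D + T) - k / n * D \<le> - k / 6"
proof -
  define u w where "u = k / (exp 1 * (n - dmax))" and "w = k / n"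
  have "0 < n" "k \<le> n / 1000"
    using assms(1-4) mult_right_mono[OF assms(2,1)] by auto
  have "0 \<le> w" and wn: "w * n = k" unfolding w_def using assms(1) \<open>0 < n\<close> by auto
  have "0 \<le> u" unfolding u_def using assms(1-3) by simp
  have "u \<le> 41/100 * w"
  proof -
    have "exp 1 \<ge> (5/2 :: real)" using exp_lower_Taylor_quadratic[of 1] by simp
    moreover have "n - dmax \<ge> 99/100 * n" using assms(3) by simp
    ultimately have "5/2 * (99/100 * n) \<le> exp 1 * (n - dmax)"
      using \<open>0 < n\<close> by (intro mult_mono) auto
    then have "u \<le> k / (100/41 * n)"
      unfolding u_def using assms(1) \<open>0 < n\<close> by (intro divide_left_mono) auto
    then show ?thesis unfolding w_def by simp
  qed
  have wk: "w * k \<le> k / 1000"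
    using mult_left_mono[of "1000 * k" n w] \<open>k \<le> n / 1000\<close> \<open>0 \<le> w\<close> wn by simp
  have "w * (k * dmax) \<le> k / 1000"
    using mult_left_mono[OF assms(4) \<open>0 \<le> w\<close>] wn by (simp add: mult_ac)
  moreover have "u * T \<le> 41/100 * w * (k * dmax)"
    using assms(1,2,5,6) \<open>0 \<le> u\<close> \<open>u \<le> 41/100 * w\<close> by (intro mult_mono) auto
  ultimately have uT: "u * T \<le> 41/100 * (k / 1000)" by simp
  have "118/100 * (k - k / 1000) \<le> 118/100 * (w * n) - 118/100 * (w * k)"
    using wk wn by (simp add: mult_ac)
  also have "\<dots> = 59/100 * w * (2 * (n - k))"
    by (simp add: field_simps)
  also have "\<dots> \<le> (w - u) * D"
    using assms(1,7) \<open>0 \<le> w\<close> \<open>u \<le> 41/100 * w\<close> \<open>k \<le> n / 1000\<close> by (intro mult_mono) auto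
  finally have wuD: "118/100 * (k - k / 1000) \<le> (w - u) * D" .
  have "k + u * (D + T) - w * D = k + u * T - (w - u) * D"
    by (simp add: algebra_simps)
  also have "\<dots> \<le> k + 41/100 * (k / 1000) - 118/100 * (k - k / 1000)"
    using uT wuD by (intro diff_mono add_left_mono)
  also have "\<dots> \<le> - k / 6"
    using assms(1) by simp
  finally show ?thesis unfolding u_def w_def .
qed

lemma a_coef_le_exp_neg_sixth:
  assumes "finite V" "B \<subseteq> S" "S \<subseteq> V" "\<forall>v\<in>V. 2 \<le> d v \<and> d v \<le> dmax"
    and "100 * dmax < card V" "1000 * dmax * card S \<le> card V"
  shows "a_coef V d B S \<le> exp (- real (card S) / 6)"
proof -
  define n k where "n = real (card V)" and "k = real (card S)"
  define D T where "D = (\<Sum>v\<in>V - S. real (d v))" and "T = (\<Sum>v\<in>S - B. real (d v))"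
  have "finite S" using assms(1,3) finite_subset by blast
  obtain v where "v \<in> V" using assms(5) by fastforce
  then have "1 \<le> dmax" using assms(4) by fastforce
  then have "card S \<le> dmax * card S" by simp
  then have "card S + dmax \<le> card V" "dmax < card V" using assms(5,6) by linarith+
  moreover have "(\<Sum>v\<in>V - B. real (d v)) = D + T"
  proof -
    have "V - B = (V - S) \<union> (S - B)" using assms(2,3) by blast
    moreover have "(\<Sum>v\<in>(V - S) \<union> (S - B). real (d v)) = D + T"
      unfolding D_def T_def using assms(1) \<open>finite S\<close> by (intro sum.union_disjoint) auto
    ultimately show ?thesis by simp
  qed
  ultimately have a_le: "a_coef V d B S
      \<le> exp (real (card (S - B)) + k / (exp 1 * (n - real dmax)) * (D + T) - k / n * D)"
    using a_coef_le_exp[OF assms(1-3), of d dmax] assms(4)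
    unfolding D_def n_def k_def by auto
  have "real (card (S - B)) \<le> k" unfolding k_def using \<open>finite S\<close> by (simp add: card_mono)
  have "2 * (n - k) \<le> D"
  proof -
    have "real (card (V - S)) * 2 \<le> D"
      unfolding D_def using assms(4) by (intro sum_bounded_below) auto
    moreover have "real (card (V - S)) = n - k"
      unfolding n_def k_def using assms(1,3) \<open>finite S\<close> by (simp add: card_Diff_subset card_mono)
    ultimately show ?thesis by simp
  qed
  have "T \<le> real (card (S - B)) * real dmax"
    unfolding T_def using assms(3,4) by (intro sum_bounded_above) auto
  also have "\<dots> \<le> k * real dmax"
    using \<open>real (card (S - B)) \<le> k\<close> by (intro mult_right_mono) auto
  finally have "k + k / (exp 1 * (n - real dmax)) * (D + T) - k / n * D \<le> - k / 6"
    using assms(5) of_nat_mono[OF assms(6), where 'a = real] \<open>1 \<le> dmax\<close> \<open>2 * (n - k) \<le> D\<close>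
    unfolding n_def k_def T_def
    by (intro exponent_le_neg_sixth) (auto intro: sum_nonneg)
  then have "real (card (S - B)) + k / (exp 1 * (n - real dmax)) * (D + T) - k / n * D
      \<le> - real (card S) / 6"
    using \<open>real (card (S - B)) \<le> k\<close> unfolding k_def by linarith
  with a_le show ?thesis by (meson exp_le_cancel_iff order_trans)
qed

theorem lemma9:
  fixes dmin dmax :: nat
  assumes "2 \<le> dmin" and "dmin \<le> dmax"
  shows "\<exists>c1 > 0. \<exists>N. \<forall>n \<ge> N. \<forall>(V :: nat set) (B :: nat set) (d :: nat \<Rightarrow> nat).
           finite V \<and> card V = n \<and> B \<subseteq> V \<and> (\<forall>v\<in>V. dmin \<le> d v \<and> d v \<le> dmax)
           \<and> real (card B) \<le> c1 * real n \<longrightarrow>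
           (\<forall>S. B \<subseteq> S \<and> S \<subseteq> V
                \<and> 30 * real (card (d ` V)) * ln (real n) \<le> real (card S)
                \<and> real (card S) \<le> c1 * real n \<longrightarrow>
                a_coef V d B S < 1 / real n ^ (3 * card (d ` V)))"
proof (intro exI[of _ "1 / (1000 * real dmax)"] conjI exI[of _ "100 * dmax + 1"] allI impI)
  show "0 < 1 / (1000 * real dmax)" using assms by simp
  fix n :: nat and V B S :: "nat set" and d :: "nat \<Rightarrow> nat"
  assume "100 * dmax + 1 \<le> n"
    and V: "finite V \<and> card V = n \<and> B \<subseteq> V \<and> (\<forall>v\<in>V. dmin \<le> d v \<and> d v \<le> dmax)
            \<and> real (card B) \<le> 1 / (1000 * real dmax) * real n"
    and S: "B \<subseteq> S \<and> S \<subseteq> V \<and> 30 * real (card (d ` V)) * ln (real n) \<le> real (card S)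
            \<and> real (card S) \<le> 1 / (1000 * real dmax) * real n"
  define x where "x = card (d ` V)"
  have "real (1000 * dmax * card S) \<le> real (card V)"
    using S V assms by (simp add: field_simps)
  then have "a_coef V d B S \<le> exp (- real (card S) / 6)"
    using V S assms \<open>100 * dmax + 1 \<le> n\<close>
    by (intro a_coef_le_exp_neg_sixth) (auto intro: order_trans simp only: of_nat_le_iff)
  also have "\<dots> \<le> exp (- 5 * real x * ln (real n))"
    using S unfolding x_def by simp
  also have "\<dots> < exp (- real (3 * x) * ln (real n))"
  proof -
    have "V \<noteq> {}" using V \<open>100 * dmax + 1 \<le> n\<close> by auto
    then have "x \<ge> 1" unfolding x_def using V by (simp add: Suc_le_eq card_gt_0_iff)
    moreover have "ln (real n) > 0" using \<open>100 * dmax + 1 \<le> n\<close> assms by simp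
    ultimately show ?thesis by simp
  qed
  also have "\<dots> = 1 / exp (real (3 * x) * ln (real n))"
    by (simp add: exp_minus divide_inverse)
  also have "exp (real (3 * x) * ln (real n)) = real n ^ (3 * x)"
    using \<open>100 * dmax + 1 \<le> n\<close> by (simp only: exp_of_nat_mult) simp
  finally show "a_coef V d B S < 1 / real n ^ (3 * card (d ` V))" unfolding x_def .
qed

end
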